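(* Fix $\epsilon>0$, $\delta>0$ and an integer $L\geq 2$ such that $2\epsilon<\delta\leq 1/L$, and suppose the prior distribution of $v^*$ is uniform on $[0,1)$. Then \[ \log\frac{1}{\epsilon}\ \leq\ N_B^*(\epsilon,\delta,L)\ \leq\ L\log\frac{1}{L\epsilon}+L-1 . \]
   Context: Bayesian private learning model. The true value $v^*$ is random with a prior distribution $P_{v^*}$ on $[0,1)$ known to everyone. A learner submits queries $q_k\in[0,1)$ and receives $r_k=\mathbb{I}(v^*\geq q_k)$. A learner strategy $\phi$ of length $N$ (which may depend on $P_{v^*}$) uses a random seed $Y$ uniform on $\{1,\dots,\mathcal{Y}\}$, independent of $v^*$, with $q_1=\phi_1(Y)$, $q_k=\phi_k(r_1,\dots,r_{k-1},Y)$, and estimate $\hat x=\phi^E(r_1,\dots,r_N,Y)\in[0,1)$; $\Phi_N$ is the set of such strategies. An adversary strategy $\psi$ maps the prior $P_{v^*}$, the learner strategy $\phi$ and the observed query sequence $\overline q=(q_1,\dots,q_N)$ (but not the responses) to a random estimate $\hat x^a\in[0,1)$; $\Psi$ denotes the set of all adversary strategies. A learner strategy $\phi\in\Phi_N$ is $(\epsilon,\delta,L)$-B-private if (1) $\mathbb{P}(|\hat x(v^*,Y)-v^*|\leq\epsilon/2)=1$ (probability over $v^*$ and $Y$), and (2) for every adversary strategy $\psi\in\Psi$, $\mathbb{P}(|\hat x^a-v^*|\leq\delta/2)\leq 1/L$ (probability over $v^*$, $Y$ and $\hat x^a$). $N_B^*(\epsilon,\delta,L)=\min\{N\in\mathbb{N}:\exists\,\phi\in\Phi_N\text{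 that is }(\epsilon,\delta,L)\text{-B-private}\}$. Logarithms are base 2 and non-integer quantities are rounded up to the nearest integer. *)

theory Defs
  imports "HOL-Probability.Probability"
begin

text \<open>A learner strategy of length N is represented by a triple (Yc, q, est):
  the seed Y is uniform on {1..Yc}; q k rs y is the (k+1)-th query given the
  previous responses rs (a list of length k) and seed y; est rs y is the estimate
  given all N responses rs and the seed y.\<close>

fun resps :: "(nat \<Rightarrow> bool list \<Rightarrow> nat \<Rightarrow> real) \<Rightarrow> real \<Rightarrow> nat \<Rightarrow> nat \<Rightarrow> bool list" where
  "resps q v y 0 = []"
| "resps q v y (Suc k) = resps q v y k @ [q k (resps q v y k) y \<le> v]"

definition queries :: "(nat \<Rightarrow> bool list \<Rightarrow> nat \<Rightarrow> real) \<Rightarrow> real \<Rightarrow> nat \<Rightarrow> nat \<Rightarrow> real list" where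
  "queries q v y N = map (\<lambda>k. q k (resps q v y k) y) [0..<N]"

definition learner_strategy ::
  "nat \<Rightarrow> nat \<Rightarrow> (nat \<Rightarrow> bool list \<Rightarrow> nat \<Rightarrow> real) \<Rightarrow> (bool list \<Rightarrow> nat \<Rightarrow> real) \<Rightarrow> bool" where
  "learner_strategy N Yc q est \<longleftrightarrow> Yc \<ge> 1
     \<and> (\<forall>k<N. \<forall>rs y. length rs = k \<longrightarrow> y \<in> {1..Yc} \<longrightarrow> q k rs y \<in> {0..<1})
     \<and> (\<forall>rs y. length rs = N \<longrightarrow> y \<in> {1..Yc} \<longrightarrow> est rs y \<in> {0..<1})"

text \<open>An adversary (for the fixed uniform prior and fixed learner strategy) maps the
  observed query sequence to the distribution of its random estimate in [0,1).\<close>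

definition adversary :: "(real list \<Rightarrow> real measure) \<Rightarrow> bool" where
  "adversary psi \<longleftrightarrow> (\<forall>qs. prob_space (psi qs) \<and> sets (psi qs) = sets borel
                          \<and> emeasure (psi qs) {0..<1} = 1)"

definition B_private_unif ::
  "real \<Rightarrow> real \<Rightarrow> nat \<Rightarrow> nat \<Rightarrow> nat \<Rightarrow> (nat \<Rightarrow> bool list \<Rightarrow> nat \<Rightarrow> real) \<Rightarrow> (bool list \<Rightarrow> nat \<Rightarrow> real) \<Rightarrow> bool" where
  "B_private_unif \<epsilon> \<delta> L N Yc q est \<longleftrightarrow>
     learner_strategy N Yc q est
   \<and> (\<Sum>y\<in>{1..Yc}. emeasure lborel {v \<in> {0..<1}. \<bar>est (resps q v y N) y - v\<bar> \<le> \<epsilon> / 2})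
        / of_nat Yc = 1
   \<and> (\<forall>psi. adversary psi \<longrightarrow>
        (\<Sum>y\<in>{1..Yc}. \<integral>\<^sup>+ v. indicator {0..<1} v
             * emeasure (psi (queries q v y N)) {x. \<bar>x - v\<bar> \<le> \<delta> / 2} \<partial>lborel)
        / of_nat Yc \<le> 1 / of_nat L)"

definition NB_unif :: "real \<Rightarrow> real \<Rightarrow> nat \<Rightarrow> nat" where
  "NB_unif \<epsilon> \<delta> L = (LEAST N. \<exists>Yc q est. B_private_unif \<epsilon> \<delta> L N Yc q est)"

end

theory Submission
  imports Defs
begin

(* Lower bound: N binary responses take at most 2^N values, so for each seed an
   epsilon-accurate learner has at most 2^N possible estimates, and the 2^N intervals of
   length epsilon around them must cover [0,1).

   Upper bound: replicated bisection. Cut [0,1) into L cells of width 1/L. The L - 1 cell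
   boundaries are queried first and reveal the cell of v. Then come K rounds; in round i the
   learner queries every one of the L cells at the same relative position, the midpoint of the
   level-i dyadic interval containing the offset frac (L v), and thereby learns the next binary
   digit of the offset. This locates v to within 1/(L 2^K) <= epsilon. The query sequence depends
   only on the K-bit code of the offset and not on the cell, so given the queries v is spread
   over L translates [(j + c/2^K)/L, (j + (c+1)/2^K)/L) that are 1/L apart; a window of width
   delta <= 1/L meets them in total length at most 1/(L 2^K), and summing over the 2^K codes
   bounds the success probability of any adversary by 1/L. *)

definition answers :: "(nat \<Rightarrow> real \<Rightarrow> real) \<Rightarrow> real \<Rightarrow> nat \<Rightarrow> bool list" where
  "answers Q v n = map (\<lambda>k. Q k v \<le> v) [0..<n]"

(* A query plan Q, with Q k v the k-th query asked when the true value is v, is turned into an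
   adaptive strategy by evaluating F at any value in [0,1) consistent with the responses seen;
   0 is a junk value for response strings that no value in [0,1) produces. *)
definition from_answers :: "(nat \<Rightarrow> real \<Rightarrow> real) \<Rightarrow> (real \<Rightarrow> real) \<Rightarrow> bool list \<Rightarrow> real" where
  "from_answers Q F rs =
     (if \<exists>w\<in>{0..<1}. answers Q w (length rs) = rs
      then F (SOME w. w \<in> {0..<1} \<and> answers Q w (length rs) = rs) else 0)"

definition answer_determined :: "(nat \<Rightarrow> real \<Rightarrow> real) \<Rightarrow> nat \<Rightarrow> (real \<Rightarrow> 'a) \<Rightarrow> bool" where
  "answer_determined Q n F \<longleftrightarrow>
     (\<forall>v\<in>{0..<1}. \<forall>w\<in>{0..<1}. answers Q v n = answers Q w n \<longrightarrow> F v = F w)"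

lemma length_answers [simp]: "length (answers Q v n) = n"
  by (simp add: answers_def)

lemma answers_eq_iff:
  "answers Q v n = answers Q w n \<longleftrightarrow> (\<forall>k<n. (Q k v \<le> v) = (Q k w \<le> w))"
  by (auto simp: answers_def list_eq_iff_nth_eq)

lemma answer_determined_mono:
  "answer_determined Q m F \<Longrightarrow> m \<le> n \<Longrightarrow> answer_determined Q n F"
  unfolding answer_determined_def answers_eq_iff by (meson less_le_trans)

lemma answer_determined_comp:
  "answer_determined Q n F \<Longrightarrow> answer_determined Q n (\<lambda>v. g (F v))"
  unfolding answer_determined_def by metis

lemma from_answers_answers:
  assumes "answer_determined Q n F" and "v \<in> {0..<1}"
  shows "from_answers Q F (answers Q v n) = F v"
proof -
  define w where "w = (SOME w. w \<in> {0..<1} \<and> answers Q w n = answers Q v n)"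
  have "w \<in> {0..<1} \<and> answers Q w n = answers Q v n"
    unfolding w_def by (rule someI[of _ v]) (use assms(2) in simp)
  then have "F w = F v"
    using assms unfolding answer_determined_def by blast
  then show ?thesis
    using assms(2) by (auto simp: from_answers_def w_def)
qed

lemma from_answers_in_unit:
  assumes "\<And>w. w \<in> {0..<1} \<Longrightarrow> F w \<in> {0..<1}"
  shows "from_answers Q F rs \<in> {0..<1}"
proof (cases "\<exists>w. w \<in> {0..<1} \<and> answers Q w (length rs) = rs")
  case True
  then have "(SOME w. w \<in> {0..<1} \<and> answers Q w (length rs) = rs) \<in> {0..<1}"
    by (rule someI2_ex) blast
  then show ?thesis
    using assms by (simp add: from_answers_def)
qed (simp add: from_answers_def)

lemma length_resps [simp]: "length (resps q v y n) = n"
  by (induction n) auto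

lemma resps_from_answers:
  assumes "v \<in> {0..<1}" and "\<And>k. k < n \<Longrightarrow> answer_determined Q k (Q k)"
  shows "resps (\<lambda>k rs y. from_answers Q (Q k) rs) v y n = answers Q v n"
  using assms(2)
proof (induction n)
  case 0
  then show ?case
    by (simp add: answers_def)
next
  case (Suc n)
  have "answer_determined Q n (Q n)"
    using Suc.prems by simp
  then have "from_answers Q (Q n) (answers Q v n) = Q n v"
    using assms(1) by (rule from_answers_answers)
  with Suc show ?case
    by (simp add: answers_def)
qed

lemma le_nat_floor_iff: "0 \<le> x \<Longrightarrow> n \<le> nat \<lfloor>x\<rfloor> \<longleftrightarrow> real n \<le> x"
  by (simp add: le_nat_iff le_floor_iff)

definition dyadic_prefix :: "nat \<Rightarrow> real \<Rightarrow> nat" where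
  "dyadic_prefix i u = nat \<lfloor>u * 2 ^ i\<rfloor>"

lemma dyadic_prefix_le: "0 \<le> u \<Longrightarrow> real (dyadic_prefix i u) \<le> u * 2 ^ i"
  unfolding dyadic_prefix_def by simp

lemma dyadic_prefix_gt: "u * 2 ^ i < real (dyadic_prefix i u) + 1"
  unfolding dyadic_prefix_def by linarith

lemma dyadic_prefix_less: "u < 1 \<Longrightarrow> dyadic_prefix i u < 2 ^ i"
  unfolding dyadic_prefix_def by (simp add: nat_less_iff floor_less_iff)

lemma dyadic_prefix_add_one_le: "u < 1 \<Longrightarrow> real (dyadic_prefix i u) + 1 \<le> 2 ^ i"
  using dyadic_prefix_less[of u i]
  by (metis Suc_eq_plus1 Suc_leI of_nat_1 of_nat_add of_nat_le_iff of_nat_numeral of_nat_power)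

lemma dyadic_prefix_0: "0 \<le> u \<Longrightarrow> u < 1 \<Longrightarrow> dyadic_prefix 0 u = 0"
  unfolding dyadic_prefix_def by simp

lemma dyadic_prefix_div:
  assumes "0 \<le> u" and "i \<le> K"
  shows "dyadic_prefix K u div 2 ^ (K - i) = dyadic_prefix i u"
proof -
  have "(2::real) ^ K = 2 ^ i * 2 ^ (K - i)"
    using assms(2) by (simp flip: power_add)
  then have "\<lfloor>u * 2 ^ i\<rfloor> = \<lfloor>u * 2 ^ K / real_of_int (2 ^ (K - i))\<rfloor>"
    by simp
  also have "\<dots> = \<lfloor>u * 2 ^ K\<rfloor> div 2 ^ (K - i)"
    by (rule floor_divide_real_eq_div) simp
  finally show ?thesis
    using assms(1) by (simp add: dyadic_prefix_def nat_div_distrib nat_power_eq)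
qed

lemma dyadic_prefix_Suc:
  assumes "0 \<le> u"
  shows "dyadic_prefix (Suc i) u =
    2 * dyadic_prefix i u + (if (2 * real (dyadic_prefix i u) + 1) / 2 ^ Suc i \<le> u then 1 else 0)"
proof -
  have "dyadic_prefix i u = dyadic_prefix (Suc i) u div 2"
    using dyadic_prefix_div[OF assms, of i "Suc i"] by simp
  moreover have "2 * dyadic_prefix i u + 1 \<le> dyadic_prefix (Suc i) u \<longleftrightarrow>
      (2 * real (dyadic_prefix i u) + 1) / 2 ^ Suc i \<le> u"
    using assms by (simp add: dyadic_prefix_def le_nat_floor_iff divide_le_eq algebra_simps)
  ultimately show ?thesis
    by auto
qed

definition cell :: "nat \<Rightarrow> real \<Rightarrow> nat" where
  "cell L v = nat \<lfloor>real L * v\<rfloor>"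

(* Query k < L - 1 is the cell boundary (k + 1)/L. Query L - 1 + L i + j, with j < L, probes
   cell j at the midpoint of the level-i dyadic interval of the offset frac (L v). *)
definition bisection_query :: "nat \<Rightarrow> nat \<Rightarrow> real \<Rightarrow> real" where
  "bisection_query L k v =
     (if k < L - 1 then real (k + 1) / real L
      else (real ((k - (L - 1)) mod L)
            + (2 * real (dyadic_prefix ((k - (L - 1)) div L) (frac (real L * v))) + 1)
              / 2 ^ Suc ((k - (L - 1)) div L)) / real L)"

definition bisection_estimate :: "nat \<Rightarrow> nat \<Rightarrow> real \<Rightarrow> real" where
  "bisection_estimate L K v =
     (real (cell L v) + (real (dyadic_prefix K (frac (real L * v))) + 1 / 2) / 2 ^ K) / real L"

lemma cell_add_frac: "0 \<le> v \<Longrightarrow> real (cell L v) + frac (real L * v) = real L * v"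
  unfolding cell_def frac_def by simp

lemma cell_less: "0 < L \<Longrightarrow> 0 \<le> v \<Longrightarrow> v < 1 \<Longrightarrow> cell L v < L"
  unfolding cell_def by (simp add: nat_less_iff floor_less_iff)

lemma bisection_query_below: "k < L - 1 \<Longrightarrow> bisection_query L k v = real (k + 1) / real L"
  by (simp add: bisection_query_def)

lemma bisection_query_round:
  assumes "j < L" and "k = L - 1 + L * i + j"
  shows "bisection_query L k v =
    (real j + (2 * real (dyadic_prefix i (frac (real L * v))) + 1) / 2 ^ Suc i) / real L"
  using assms by (simp add: bisection_query_def)

lemma bisection_index_cases:
  fixes k L :: nat
  assumes "0 < L"
  obtains "k < L - 1" | i j where "j < L" and "k = L - 1 + L * i + j"
proof (cases "k < L - 1")
  case False
  show ?thesis
  proof (rule that(2))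
    show "(k - (L - 1)) mod L < L"
      using assms by simp
    show "k = L - 1 + L * ((k - (L - 1)) div L) + (k - (L - 1)) mod L"
      using False mult_div_mod_eq[of L "k - (L - 1)"] by linarith
  qed
qed

lemma boundary_answers_eq_lessThan_cell:
  assumes "0 < L" and "0 \<le> v" and "v < 1"
  shows "{k. k < L - 1 \<and> bisection_query L k v \<le> v} = {..<cell L v}"
proof -
  have "real (k + 1) / real L \<le> v \<longleftrightarrow> k < cell L v" for k
    using assms le_nat_floor_iff[of "real L * v" "Suc k"]
    by (simp add: cell_def divide_le_eq mult.commute Suc_le_eq)
  moreover have "cell L v \<le> L - 1"
    using cell_less[OF assms] by simp
  ultimately show ?thesis
    by (force simp: bisection_query_below)
qed

lemma cell_answer_determined:
  assumes "0 < L"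
  shows "answer_determined (bisection_query L) (L - 1) (cell L)"
  unfolding answer_determined_def
proof (intro ballI impI)
  fix v w :: real
  assume v: "v \<in> {0..<1}" and w: "w \<in> {0..<1}"
    and "answers (bisection_query L) v (L - 1) = answers (bisection_query L) w (L - 1)"
  then have "{k. k < L - 1 \<and> bisection_query L k v \<le> v} = {k. k < L - 1 \<and> bisection_query L k w \<le> w}"
    by (auto simp: answers_eq_iff)
  then have "{..<cell L v} = {..<cell L w}"
    using boundary_answers_eq_lessThan_cell[OF assms, of v]
      boundary_answers_eq_lessThan_cell[OF assms, of w] v w by simp
  then show "cell L v = cell L w"
    by simp
qed

lemma bisection_answer_bit:
  assumes "0 < L" and "0 \<le> v" and "v < 1"
  shows "bisection_query L (L - 1 + L * i + cell L v) v \<le> v \<longleftrightarrow>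
    (2 * real (dyadic_prefix i (frac (real L * v))) + 1) / 2 ^ Suc i \<le> frac (real L * v)"
proof -
  have "bisection_query L (L - 1 + L * i + cell L v) v =
      (real (cell L v) + (2 * real (dyadic_prefix i (frac (real L * v))) + 1) / 2 ^ Suc i) / real L"
    using cell_less[OF assms] by (rule bisection_query_round) simp
  then have "bisection_query L (L - 1 + L * i + cell L v) v \<le> v \<longleftrightarrow>
      real (cell L v) + (2 * real (dyadic_prefix i (frac (real L * v))) + 1) / 2 ^ Suc i \<le> real L * v"
    using assms by (simp add: divide_le_eq mult.commute)
  then show ?thesis
    using cell_add_frac[OF assms(2), of L] by linarith
qed

lemma prefix_answer_determined:
  assumes "0 < L"
  shows "answer_determined (bisection_query L) (L - 1 + L * i)
    (\<lambda>v. dyadic_prefix i (frac (real L * v)))"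
proof (induction i)
  case 0
  then show ?case
    by (simp add: answer_determined_def dyadic_prefix_0 frac_lt_1)
next
  case (Suc i)
  have cell_determined: "answer_determined (bisection_query L) (L - 1 + L * Suc i) (cell L)"
    by (rule answer_determined_mono[OF cell_answer_determined[OF assms]]) simp
  have prefix_determined:
    "answer_determined (bisection_query L) (L - 1 + L * Suc i) (\<lambda>v. dyadic_prefix i (frac (real L * v)))"
    by (rule answer_determined_mono[OF Suc.IH]) simp
  show ?case
    unfolding answer_determined_def
  proof (intro ballI impI)
    fix v w :: real
    assume v: "v \<in> {0..<1}" and w: "w \<in> {0..<1}" and agree:
      "answers (bisection_query L) v (L - 1 + L * Suc i) = answers (bisection_query L) w (L - 1 + L * Suc i)"
    have same_cell: "cell L v = cell L w"
      using cell_determined v w agree unfolding answer_determined_def by blast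
    have same_prefix: "dyadic_prefix i (frac (real L * v)) = dyadic_prefix i (frac (real L * w))"
      using prefix_determined v w agree unfolding answer_determined_def by blast
    have "L - 1 + L * i + cell L v < L - 1 + L * Suc i"
      using cell_less[OF assms] v by simp
    then have "bisection_query L (L - 1 + L * i + cell L v) v \<le> v \<longleftrightarrow>
        bisection_query L (L - 1 + L * i + cell L w) w \<le> w"
      using agree same_cell unfolding answers_eq_iff by simp
    then have "(2 * real (dyadic_prefix i (frac (real L * v))) + 1) / 2 ^ Suc i \<le> frac (real L * v) \<longleftrightarrow>
        (2 * real (dyadic_prefix i (frac (real L * w))) + 1) / 2 ^ Suc i \<le> frac (real L * w)"
      using bisection_answer_bit[OF assms, of v i] bisection_answer_bit[OF assms, of w i] v w
      by (simp only: atLeastLessThan_iff simp_thms)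
    with same_prefix show
      "dyadic_prefix (Suc i) (frac (real L * v)) = dyadic_prefix (Suc i) (frac (real L * w))"
      by (simp add: dyadic_prefix_Suc)
  qed
qed

lemma bisection_query_answer_determined:
  assumes "0 < L"
  shows "answer_determined (bisection_query L) k (bisection_query L k)"
proof (rule bisection_index_cases[OF assms, of k])
  assume "k < L - 1"
  then show ?thesis
    by (simp add: answer_determined_def bisection_query_below)
next
  fix i j
  assume round: "j < L" "k = L - 1 + L * i + j"
  have "answer_determined (bisection_query L) k (\<lambda>v. dyadic_prefix i (frac (real L * v)))"
    by (rule answer_determined_mono[OF prefix_answer_determined[OF assms]]) (use round(2) in arith)
  then have "answer_determined (bisection_query L) k
      (\<lambda>v. (real j + (2 * real (dyadic_prefix i (frac (real L * v))) + 1) / 2 ^ Suc i) / real L)"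
    by (rule answer_determined_comp)
  moreover have "bisection_query L k =
      (\<lambda>v. (real j + (2 * real (dyadic_prefix i (frac (real L * v))) + 1) / 2 ^ Suc i) / real L)"
    by (intro ext bisection_query_round[OF round])
  ultimately show ?thesis
    by simp
qed

lemma bisection_estimate_answer_determined:
  assumes "0 < L"
  shows "answer_determined (bisection_query L) (L - 1 + L * K) (bisection_estimate L K)"
proof -
  have "answer_determined (bisection_query L) (L - 1 + L * K) (cell L)"
    using answer_determined_mono[OF cell_answer_determined[OF assms]] by simp
  with prefix_answer_determined[OF assms, of K] show ?thesis
    unfolding answer_determined_def bisection_estimate_def by metis
qed

lemma bisection_query_in_unit:
  assumes "0 < L"
  shows "bisection_query L k v \<in> {0..<1}"
proof (rule bisection_index_cases[OF assms, of k])
  assume "k < L - 1"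
  then show ?thesis
    by (simp add: bisection_query_below)
next
  fix i j
  assume round: "j < L" "k = L - 1 + L * i + j"
  have "real (dyadic_prefix i (frac (real L * v))) + 1 \<le> 2 ^ i"
    by (simp add: dyadic_prefix_add_one_le frac_lt_1)
  then have "(2 * real (dyadic_prefix i (frac (real L * v))) + 1) / 2 ^ Suc i < 1"
    by simp
  moreover have "real j + 1 \<le> real L"
    using round(1) by simp
  ultimately have "real j + (2 * real (dyadic_prefix i (frac (real L * v))) + 1) / 2 ^ Suc i < real L"
    by linarith
  then show ?thesis
    unfolding bisection_query_round[OF round] using assms by (simp add: divide_less_eq)
qed

lemma bisection_estimate_in_unit:
  assumes "0 < L" and "0 \<le> v" and "v < 1"
  shows "bisection_estimate L K v \<in> {0..<1}"
proof -
  have "real (dyadic_prefix K (frac (real L * v))) + 1 \<le> 2 ^ K"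
    by (simp add: dyadic_prefix_add_one_le frac_lt_1)
  then have "(real (dyadic_prefix K (frac (real L * v))) + 1 / 2) / 2 ^ K < 1"
    by simp
  moreover have "real (cell L v) + 1 \<le> real L"
    using cell_less[OF assms] by simp
  ultimately have
    "real (cell L v) + (real (dyadic_prefix K (frac (real L * v))) + 1 / 2) / 2 ^ K < real L"
    by linarith
  then show ?thesis
    using assms(1) by (simp add: bisection_estimate_def divide_less_eq)
qed

lemma bisection_estimate_error:
  assumes "0 < L" and "0 \<le> v"
  shows "\<bar>bisection_estimate L K v - v\<bar> \<le> 1 / (real L * 2 ^ K) / 2"
proof -
  define u where "u = frac (real L * v)"
  define p where "p = real (dyadic_prefix K u)"
  define c where "c = real (cell L v)"
  have "\<bar>p + 1 / 2 - u * 2 ^ K\<bar> \<le> 1 / 2"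
    using dyadic_prefix_le[of u K] dyadic_prefix_gt[of u K]
    unfolding p_def u_def abs_le_iff by simp
  moreover have "v = (c + u) / real L"
    using cell_add_frac[OF assms(2), of L] assms(1) unfolding c_def u_def by (simp add: field_simps)
  then have "bisection_estimate L K v - v = (p + 1 / 2 - u * 2 ^ K) / (real L * 2 ^ K)"
    unfolding bisection_estimate_def c_def [symmetric] p_def [symmetric] u_def [symmetric]
    by (subst \<open>v = _\<close>) (use assms(1) in \<open>simp add: field_simps\<close>)
  ultimately show ?thesis
    using assms(1) by (simp add: divide_le_eq)
qed

definition periodic_pieces :: "real \<Rightarrow> real \<Rightarrow> real \<Rightarrow> real set" where
  "periodic_pieces a h w = (\<Union>j::int. {a + j * h..<a + j * h + w})"

lemma periodic_pieces_window_subset: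
  fixes a h w s :: real and j :: int
  assumes "0 < h" and "w \<le> h" and "a + j * h \<le> s" and "s < a + (j + 1) * h"
  shows "{s..s + h} \<inter> periodic_pieces a h w
    \<subseteq> {s..<max s (a + j * h + w)} \<union> {a + (j + 1) * h..min (a + (j + 1) * h + w) (s + h)}"
proof
  fix v
  assume "v \<in> {s..s + h} \<inter> periodic_pieces a h w"
  then obtain i :: int where v: "s \<le> v" "v \<le> s + h" "a + i * h \<le> v" "v < a + i * h + w"
    by (auto simp: periodic_pieces_def)
  consider "i \<le> j" | "i = j + 1" | "j + 2 \<le> i"
    by linarith
  then show "v \<in> {s..<max s (a + j * h + w)} \<union> {a + (j + 1) * h..min (a + (j + 1) * h + w) (s + h)}"
  proof cases
    case 1
    then have "i * h \<le> j * h"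
      using assms(1) by (simp add: mult_right_mono)
    with v show ?thesis
      by simp
  next
    case 2
    with v show ?thesis
      by simp
  next
    case 3
    then have "a + (j + 2) * h \<le> a + i * h"
      using assms(1) by (simp add: mult_right_mono flip: of_int_le_iff)
    with v assms(4) show ?thesis
      by (simp add: algebra_simps)
  qed
qed

lemma emeasure_periodic_pieces_le:
  fixes a h w s :: real
  assumes "0 < h" and "0 \<le> w" and "w \<le> h"
  shows "emeasure lborel ({s..s + h} \<inter> periodic_pieces a h w) \<le> ennreal w"
proof -
  define j where "j = \<lfloor>(s - a) / h\<rfloor>"
  have "j \<le> (s - a) / h" and "(s - a) / h < j + 1"
    unfolding j_def by linarith+
  then have j: "a + j * h \<le> s" "s < a + (j + 1) * h"
    using assms(1) by (simp_all add: pos_le_divide_eq pos_divide_less_eq algebra_simps)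
  have "a + (j + 1) * h \<le> s + h"
    using j(1) by (simp add: algebra_simps)
  define A where "A = {s..<max s (a + j * h + w)}"
  define B where "B = {a + (j + 1) * h..min (a + (j + 1) * h + w) (s + h)}"
  have "emeasure lborel ({s..s + h} \<inter> periodic_pieces a h w) \<le> emeasure lborel (A \<union> B)"
    using periodic_pieces_window_subset[OF assms(1,3) j] unfolding A_def B_def
    by (rule emeasure_mono) simp
  also have "\<dots> \<le> emeasure lborel A + emeasure lborel B"
    by (rule emeasure_subadditive) (simp_all add: A_def B_def)
  also have "\<dots> = ennreal (max s (a + j * h + w) - s
      + (min (a + (j + 1) * h + w) (s + h) - (a + (j + 1) * h)))"
    using \<open>a + (j + 1) * h \<le> s + h\<close> assms(2) by (simp add: A_def B_def)
  also have "\<dots> \<le> ennreal w"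
    using j assms by (intro ennreal_leI) (simp add: max_def min_def algebra_simps)
  finally show ?thesis .
qed

lemma prefix_level_set_subset_periodic_pieces:
  assumes "0 < L"
  shows "{v. dyadic_prefix K (frac (real L * v)) = c} \<subseteq>
    periodic_pieces (c / (real L * 2 ^ K)) (1 / real L) (1 / (real L * 2 ^ K))"
proof
  fix v
  assume "v \<in> {v. dyadic_prefix K (frac (real L * v)) = c}"
  then have "real c \<le> frac (real L * v) * 2 ^ K" "frac (real L * v) * 2 ^ K < real c + 1"
    using dyadic_prefix_le[of "frac (real L * v)" K] dyadic_prefix_gt[of "frac (real L * v)" K]
    by simp_all
  then have "v \<in> {c / (real L * 2 ^ K) + \<lfloor>real L * v\<rfloor> * (1 / real L)..<
      c / (real L * 2 ^ K) + \<lfloor>real L * v\<rfloor> * (1 / real L) + 1 / (real L * 2 ^ K)}"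
    using assms by (simp add: frac_def field_simps)
  then show "v \<in> periodic_pieces (c / (real L * 2 ^ K)) (1 / real L) (1 / (real L * 2 ^ K))"
    unfolding periodic_pieces_def by blast
qed

lemma emeasure_prefix_level_set_window_le:
  assumes "0 < L" and "\<delta> \<le> 1 / real L"
  shows "emeasure lborel
      ({v \<in> {0..<1}. dyadic_prefix K (frac (real L * v)) = c} \<inter> {v. \<bar>x - v\<bar> \<le> \<delta> / 2})
    \<le> ennreal (1 / (real L * 2 ^ K))"
proof -
  have "{v. \<bar>x - v\<bar> \<le> \<delta> / 2} \<subseteq> {x - \<delta> / 2..x - \<delta> / 2 + 1 / real L}"
  proof
    fix v
    assume "v \<in> {v. \<bar>x - v\<bar> \<le> \<delta> / 2}"
    then show "v \<in> {x - \<delta> / 2..x - \<delta> / 2 + 1 / real L}"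
      using abs_ge_self[of "x - v"] abs_ge_minus_self[of "x - v"] assms(2) by simp
  qed
  then have "{v \<in> {0..<1}. dyadic_prefix K (frac (real L * v)) = c} \<inter> {v. \<bar>x - v\<bar> \<le> \<delta> / 2}
      \<subseteq> {x - \<delta> / 2..x - \<delta> / 2 + 1 / real L} \<inter>
        periodic_pieces (c / (real L * 2 ^ K)) (1 / real L) (1 / (real L * 2 ^ K))"
    using prefix_level_set_subset_periodic_pieces[OF assms(1), of K c] by blast
  then have "emeasure lborel
      ({v \<in> {0..<1}. dyadic_prefix K (frac (real L * v)) = c} \<inter> {v. \<bar>x - v\<bar> \<le> \<delta> / 2})
    \<le> emeasure lborel ({x - \<delta> / 2..x - \<delta> / 2 + 1 / real L} \<inter>
        periodic_pieces (c / (real L * 2 ^ K)) (1 / real L) (1 / (real L * 2 ^ K)))"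
    by (rule emeasure_mono) (simp add: periodic_pieces_def)
  also have "\<dots> \<le> ennreal (1 / (real L * 2 ^ K))"
    using assms(1) by (intro emeasure_periodic_pieces_le) (simp_all add: field_simps)
  finally show ?thesis .
qed

lemma prefix_level_set_borel:
  "{v \<in> {0..<1}. dyadic_prefix K (frac (real L * v)) = c} \<in> sets borel"
  unfolding dyadic_prefix_def frac_def by measurable

lemma window_pairs_in_sets_pair_measure:
  fixes S :: "real set"
  assumes "S \<in> sets borel" and "sets \<mu> = sets borel"
  shows "{p :: real \<times> real. fst p \<in> S \<and> \<bar>snd p - fst p\<bar> \<le> r} \<in> sets (lborel \<Otimes>\<^sub>M \<mu>)"
proof -
  have sets_eq: "sets (lborel \<Otimes>\<^sub>M \<mu>) = sets (borel \<Otimes>\<^sub>M borel)"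
    by (rule sets_pair_measure_cong) (simp_all add: assms(2))
  have "S \<times> UNIV \<in> sets (borel \<Otimes>\<^sub>M (borel :: real measure))"
    using assms(1) by (intro pair_measureI) simp_all
  moreover have "{p \<in> space (borel \<Otimes>\<^sub>M borel). \<bar>snd p - fst p\<bar> \<le> r}
      \<in> sets (borel \<Otimes>\<^sub>M (borel :: real measure))"
    by measurable
  moreover have "{p :: real \<times> real. fst p \<in> S \<and> \<bar>snd p - fst p\<bar> \<le> r}
      = (S \<times> UNIV) \<inter> {p \<in> space (borel \<Otimes>\<^sub>M borel). \<bar>snd p - fst p\<bar> \<le> r}"
    by (auto simp: space_pair_measure)
  ultimately show ?thesis
    unfolding sets_eq by simp
qed

(* If the queries reveal nothing beyond a code with M values, Tonelli lets us integrate over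
   the adversary's guess x first; each of the M level sets of the code then contributes at
   most rho. *)
lemma adversary_success_le_if_queries_factor:
  fixes \<kappa> :: "real \<Rightarrow> nat" and qs :: "real \<Rightarrow> real list" and \<rho> :: ennreal
  assumes adv: "adversary psi"
    and code_less: "\<And>v. v \<in> {0..<1} \<Longrightarrow> \<kappa> v < M"
    and factor: "\<And>v w. v \<in> {0..<1} \<Longrightarrow> w \<in> {0..<1} \<Longrightarrow> \<kappa> v = \<kappa> w \<Longrightarrow> qs v = qs w"
    and level_borel: "\<And>c. {v \<in> {0..<1}. \<kappa> v = c} \<in> sets borel"
    and level_small: "\<And>c x. emeasure lborel ({v \<in> {0..<1}. \<kappa> v = c} \<inter> {v. \<bar>x - v\<bar> \<le> r}) \<le> \<rho>"
  shows "(\<integral>\<^sup>+ v. indicator {0..<1} v * emeasure (psi (qs v)) {x. \<bar>x - v\<bar> \<le> r} \<partial>lborel)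
    \<le> of_nat M * \<rho>"
proof -
  define S where "S c = {v \<in> {0..<1}. \<kappa> v = c}" for c
  define \<mu> where "\<mu> c = psi (qs (SOME v. v \<in> S c))" for c
  define X where "X c = {p :: real \<times> real. fst p \<in> S c \<and> \<bar>snd p - fst p\<bar> \<le> r}" for c
  have prob: "prob_space (\<mu> c)" and sets_\<mu>: "sets (\<mu> c) = sets borel" for c
    using adv unfolding adversary_def \<mu>_def by auto
  interpret \<mu>: prob_space "\<mu> c" for c
    by (rule prob)
  have pair: "pair_sigma_finite lborel (\<mu> c)" for c
    by (simp add: pair_sigma_finite_def lborel.sigma_finite_measure_axioms
        \<mu>.sigma_finite_measure_axioms)
  have X_sets: "X c \<in> sets (lborel \<Otimes>\<^sub>M \<mu> c)" for c
    unfolding X_def S_def using level_borel sets_\<mu> by (rule window_pairs_in_sets_pair_measure)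
  have pointwise: "indicator {0..<1} v * emeasure (psi (qs v)) {x. \<bar>x - v\<bar> \<le> r}
      = (\<Sum>c<M. emeasure (\<mu> c) (Pair v -` X c))" for v
  proof (cases "v \<in> {0..<1}")
    case True
    have "(SOME w. w \<in> S (\<kappa> v)) \<in> S (\<kappa> v)"
      by (rule someI[of _ v]) (use True in \<open>simp add: S_def\<close>)
    then have "qs (SOME w. w \<in> S (\<kappa> v)) = qs v"
      using factor[OF _ True] unfolding S_def by blast
    then have "\<mu> (\<kappa> v) = psi (qs v)"
      by (simp add: \<mu>_def)
    moreover have "Pair v -` X c = (if c = \<kappa> v then {x. \<bar>x - v\<bar> \<le> r} else {})" for c
      using True by (auto simp: X_def S_def abs_minus_commute)
    then have "(\<Sum>c<M. emeasure (\<mu> c) (Pair v -` X c))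
        = (\<Sum>c<M. if c = \<kappa> v then emeasure (\<mu> c) {x. \<bar>x - v\<bar> \<le> r} else 0)"
      by (intro sum.cong) simp_all
    ultimately show ?thesis
      using True code_less by simp
  next
    case False
    then have "Pair v -` X c = {}" for c
      by (auto simp: X_def S_def)
    with False show ?thesis
      by simp
  qed
  have "(\<integral>\<^sup>+ v. indicator {0..<1} v * emeasure (psi (qs v)) {x. \<bar>x - v\<bar> \<le> r} \<partial>lborel)
      = (\<Sum>c<M. \<integral>\<^sup>+ v. emeasure (\<mu> c) (Pair v -` X c) \<partial>lborel)"
    unfolding pointwise by (rule nn_integral_sum) (rule \<mu>.measurable_emeasure_Pair[OF X_sets])
  also have "\<dots> = (\<Sum>c<M. \<integral>\<^sup>+ x. emeasure lborel ((\<lambda>v. (v, x)) -` X c) \<partial>\<mu> c)"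
    by (simp add: \<mu>.emeasure_pair_measure_alt[OF X_sets, symmetric]
        pair_sigma_finite.emeasure_pair_measure_alt2[OF pair X_sets])
  also have "\<dots> \<le> (\<Sum>c<M. \<integral>\<^sup>+ x. \<rho> \<partial>\<mu> c)"
  proof (intro sum_mono nn_integral_mono)
    fix c x
    have "(\<lambda>v. (v, x)) -` X c = S c \<inter> {v. \<bar>x - v\<bar> \<le> r}"
      by (auto simp: X_def abs_minus_commute)
    then show "emeasure lborel ((\<lambda>v. (v, x)) -` X c) \<le> \<rho>"
      using level_small unfolding S_def by simp
  qed
  also have "\<dots> = of_nat M * \<rho>"
    by (simp add: \<mu>.emeasure_space_1)
  finally show ?thesis .
qed

definition bisection_learner :: "nat \<Rightarrow> nat \<Rightarrow> bool list \<Rightarrow> nat \<Rightarrow> real" where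
  "bisection_learner L k rs y = from_answers (bisection_query L) (bisection_query L k) rs"

definition bisection_estimator :: "nat \<Rightarrow> nat \<Rightarrow> bool list \<Rightarrow> nat \<Rightarrow> real" where
  "bisection_estimator L K rs y = from_answers (bisection_query L) (bisection_estimate L K) rs"

lemma resps_bisection_learner:
  assumes "0 < L" and "v \<in> {0..<1}"
  shows "resps (bisection_learner L) v y n = answers (bisection_query L) v n"
proof -
  have "bisection_learner L = (\<lambda>k rs y. from_answers (bisection_query L) (bisection_query L k) rs)"
    by (simp add: fun_eq_iff bisection_learner_def)
  then show ?thesis
    using resps_from_answers[OF assms(2) bisection_query_answer_determined[OF assms(1)]] by simp
qed

lemma queries_bisection_learner:
  assumes "0 < L" and "v \<in> {0..<1}"
  shows "queries (bisection_learner L) v y n = map (\<lambda>k. bisection_query L k v) [0..<n]"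
  using assms
  by (simp add: queries_def resps_bisection_learner bisection_learner_def
      from_answers_answers bisection_query_answer_determined)

lemma bisection_estimator_resps:
  assumes "0 < L" and "v \<in> {0..<1}"
  shows "bisection_estimator L K (resps (bisection_learner L) v y (L - 1 + L * K)) y
    = bisection_estimate L K v"
  using from_answers_answers[OF bisection_estimate_answer_determined[OF assms(1)] assms(2)]
  by (simp add: resps_bisection_learner[OF assms] bisection_estimator_def)

lemma learner_strategy_bisection:
  assumes "0 < L"
  shows "learner_strategy N 1 (bisection_learner L) (bisection_estimator L K)"
proof -
  have "from_answers (bisection_query L) (bisection_query L k) rs \<in> {0..<1}" for k rs
    using bisection_query_in_unit[OF assms] by (rule from_answers_in_unit)
  moreover have "from_answers (bisection_query L) (bisection_estimate L K) rs \<in> {0..<1}" for rs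
    using bisection_estimate_in_unit[OF assms] by (intro from_answers_in_unit) simp
  ultimately show ?thesis
    by (simp add: learner_strategy_def bisection_learner_def bisection_estimator_def)
qed

lemma bisection_query_eq_if_prefix_eq:
  assumes "0 < L" and "k < L - 1 + L * K"
    and "dyadic_prefix K (frac (real L * v)) = dyadic_prefix K (frac (real L * w))"
  shows "bisection_query L k v = bisection_query L k w"
proof (rule bisection_index_cases[OF assms(1), of k])
  assume "k < L - 1"
  then show ?thesis
    by (simp add: bisection_query_below)
next
  fix i j
  assume round: "j < L" "k = L - 1 + L * i + j"
  with assms(2) have "L * i < L * K"
    by linarith
  then have "i < K"
    by simp
  then have "dyadic_prefix i (frac (real L * v)) = dyadic_prefix i (frac (real L * w))"
    using assms(3) dyadic_prefix_div[of _ i K] by (metis frac_ge_0 less_imp_le)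
  then show ?thesis
    by (simp add: bisection_query_round[OF round])
qed

lemma adversary_success_bisection_le:
  assumes "0 < L" and "\<delta> \<le> 1 / real L" and "adversary psi"
  shows "(\<integral>\<^sup>+ v. indicator {0..<1} v * emeasure (psi (queries (bisection_learner L) v y (L - 1 + L * K)))
      {x. \<bar>x - v\<bar> \<le> \<delta> / 2} \<partial>lborel)
    \<le> ennreal (1 / real L)"
proof -
  have "(\<integral>\<^sup>+ v. indicator {0..<1} v * emeasure (psi (queries (bisection_learner L) v y (L - 1 + L * K)))
      {x. \<bar>x - v\<bar> \<le> \<delta> / 2} \<partial>lborel)
    \<le> of_nat (2 ^ K) * ennreal (1 / (real L * 2 ^ K))"
  proof (rule adversary_success_le_if_queries_factor[OF assms(3)])
    show "dyadic_prefix K (frac (real L * v)) < 2 ^ K" for v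
      by (simp add: dyadic_prefix_less frac_lt_1)
    show "queries (bisection_learner L) v y (L - 1 + L * K)
        = queries (bisection_learner L) w y (L - 1 + L * K)"
      if "v \<in> {0..<1}" "w \<in> {0..<1}"
        "dyadic_prefix K (frac (real L * v)) = dyadic_prefix K (frac (real L * w))" for v w
      using bisection_query_eq_if_prefix_eq[OF assms(1) _ that(3)]
      by (simp add: queries_bisection_learner[OF assms(1) that(1)]
          queries_bisection_learner[OF assms(1) that(2)])
    show "{v \<in> {0..<1}. dyadic_prefix K (frac (real L * v)) = c} \<in> sets borel" for c
      by (rule prefix_level_set_borel)
    show "emeasure lborel
        ({v \<in> {0..<1}. dyadic_prefix K (frac (real L * v)) = c} \<inter> {v. \<bar>x - v\<bar> \<le> \<delta> / 2})
      \<le> ennreal (1 / (real L * 2 ^ K))" for c x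
      by (rule emeasure_prefix_level_set_window_le[OF assms(1,2)])
  qed
  also have "\<dots> = ennreal (1 / real L)"
    by (simp add: ennreal_of_nat_eq_real_of_nat flip: ennreal_mult)
  finally show ?thesis .
qed

lemma B_private_unif_bisection:
  assumes "0 < L" and "\<delta> \<le> 1 / real L" and "1 / (real L * 2 ^ K) \<le> \<epsilon>"
  shows "B_private_unif \<epsilon> \<delta> L (L - 1 + L * K) 1 (bisection_learner L) (bisection_estimator L K)"
  unfolding B_private_unif_def
proof (intro conjI allI impI)
  show "learner_strategy (L - 1 + L * K) 1 (bisection_learner L) (bisection_estimator L K)"
    using assms(1) by (rule learner_strategy_bisection)
  have "\<bar>bisection_estimator L K (resps (bisection_learner L) v 1 (L - 1 + L * K)) 1 - v\<bar> \<le> \<epsilon> / 2"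
    if "v \<in> {0..<1}" for v
    unfolding bisection_estimator_resps[OF assms(1) that]
    using bisection_estimate_error[OF assms(1), of v K] assms(3) that
    by (meson atLeastLessThan_iff divide_right_mono order_trans zero_le_numeral)
  then have "{v \<in> {0..<1}.
      \<bar>bisection_estimator L K (resps (bisection_learner L) v 1 (L - 1 + L * K)) 1 - v\<bar> \<le> \<epsilon> / 2}
      = {0..<1}"
    by blast
  then show "(\<Sum>y\<in>{1..1}. emeasure lborel {v \<in> {0..<1}.
      \<bar>bisection_estimator L K (resps (bisection_learner L) v y (L - 1 + L * K)) y - v\<bar> \<le> \<epsilon> / 2})
      / of_nat 1 = 1"
    by simp
next
  fix psi
  assume "adversary psi"
  have "ennreal (1 / real L) = 1 / of_nat L"
    using assms(1) divide_ennreal[of 1 "real L"] by (simp add: ennreal_of_nat_eq_real_of_nat)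
  then show "(\<Sum>y\<in>{1..1}. \<integral>\<^sup>+ v. indicator {0..<1} v
      * emeasure (psi (queries (bisection_learner L) v y (L - 1 + L * K))) {x. \<bar>x - v\<bar> \<le> \<delta> / 2}
      \<partial>lborel) / of_nat 1
    \<le> 1 / of_nat L"
    using adversary_success_bisection_le[OF assms(1,2) \<open>adversary psi\<close>]
    by (simp add: divide_ennreal_def)
qed

lemma emeasure_accurate_set_le:
  "emeasure lborel {v \<in> {0..<1}. \<bar>est (resps q v y N) y - v\<bar> \<le> \<epsilon> / 2} \<le> ennreal (2 ^ N * \<epsilon>)"
proof -
  define Rs where "Rs = {rs :: bool list. length rs = N}"
  have "finite Rs" and "card Rs = 2 ^ N"
    unfolding Rs_def
    using finite_lists_length_eq[of "UNIV :: bool set" N] card_lists_length_eq[of "UNIV :: bool set" N]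
    by simp_all
  have "{v \<in> {0..<1}. \<bar>est (resps q v y N) y - v\<bar> \<le> \<epsilon> / 2}
      \<subseteq> (\<Union>rs\<in>Rs. {est rs y - \<epsilon> / 2..est rs y + \<epsilon> / 2})"
  proof
    fix v
    assume "v \<in> {v \<in> {0..<1}. \<bar>est (resps q v y N) y - v\<bar> \<le> \<epsilon> / 2}"
    then have "v \<in> {est (resps q v y N) y - \<epsilon> / 2..est (resps q v y N) y + \<epsilon> / 2}"
      using abs_ge_self[of "est (resps q v y N) y - v"] abs_ge_minus_self[of "est (resps q v y N) y - v"]
      by simp
    moreover have "resps q v y N \<in> Rs"
      by (simp add: Rs_def)
    ultimately show "v \<in> (\<Union>rs\<in>Rs. {est rs y - \<epsilon> / 2..est rs y + \<epsilon> / 2})"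
      by blast
  qed
  then have "emeasure lborel {v \<in> {0..<1}. \<bar>est (resps q v y N) y - v\<bar> \<le> \<epsilon> / 2}
      \<le> emeasure lborel (\<Union>rs\<in>Rs. {est rs y - \<epsilon> / 2..est rs y + \<epsilon> / 2})"
    by (rule emeasure_mono) (simp add: \<open>finite Rs\<close> sets.finite_UN)
  also have "\<dots> \<le> (\<Sum>rs\<in>Rs. emeasure lborel {est rs y - \<epsilon> / 2..est rs y + \<epsilon> / 2})"
    by (rule emeasure_subadditive_finite) (auto simp: \<open>finite Rs\<close>)
  also have "\<dots> \<le> (\<Sum>rs\<in>Rs. ennreal \<epsilon>)"
    by (intro sum_mono) (simp add: emeasure_lborel_Icc_eq)
  also have "\<dots> = ennreal (2 ^ N * \<epsilon>)"
    using \<open>card Rs = 2 ^ N\<close> by (simp add: ennreal_mult' ennreal_of_nat_eq_real_of_nat)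
  finally show ?thesis .
qed

lemma B_private_unif_imp_pow_ge:
  assumes "B_private_unif \<epsilon> \<delta> L N Yc q est"
  shows "1 \<le> 2 ^ N * \<epsilon>"
proof -
  have "Yc \<ge> 1"
    using assms by (simp add: B_private_unif_def learner_strategy_def)
  have "1 = (\<Sum>y\<in>{1..Yc}. emeasure lborel {v \<in> {0..<1}. \<bar>est (resps q v y N) y - v\<bar> \<le> \<epsilon> / 2})
      / of_nat Yc"
    using assms by (simp add: B_private_unif_def)
  also have "\<dots> \<le> (\<Sum>y\<in>{1..Yc}. ennreal (2 ^ N * \<epsilon>)) / of_nat Yc"
    by (intro divide_right_mono_ennreal sum_mono emeasure_accurate_set_le)
  also have "\<dots> = ennreal (2 ^ N * \<epsilon>) * of_nat Yc / of_nat Yc"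
    by (simp add: mult.commute)
  also have "\<dots> = ennreal (2 ^ N * \<epsilon>)"
    by (rule ennreal_mult_divide_eq) (use \<open>Yc \<ge> 1\<close> in auto)
  finally show ?thesis
    by (simp add: ennreal_le_iff2)
qed

lemma B_private_unif_log_le:
  assumes "B_private_unif \<epsilon> \<delta> L N Yc q est" and "0 < \<epsilon>"
  shows "log 2 (1 / \<epsilon>) \<le> real N"
proof -
  have "1 / \<epsilon> \<le> 2 powr real N"
    using B_private_unif_imp_pow_ge[OF assms(1)] assms(2) by (simp add: powr_realpow field_simps)
  then show ?thesis
    using assms(2) by (simp add: log_le_iff)
qed

lemma NB_unif_le: "B_private_unif \<epsilon> \<delta> L N Yc q est \<Longrightarrow> NB_unif \<epsilon> \<delta> L \<le> N"
  unfolding NB_unif_def by (rule Least_le) blast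

lemma B_private_unif_NB_unif:
  "B_private_unif \<epsilon> \<delta> L N Yc q est \<Longrightarrow> \<exists>Yc q est. B_private_unif \<epsilon> \<delta> L (NB_unif \<epsilon> \<delta> L) Yc q est"
  unfolding NB_unif_def by (rule LeastI) blast

lemma le_two_pow_ceiling_log: "0 < x \<Longrightarrow> x \<le> 2 ^ nat \<lceil>log 2 x\<rceil>"
proof -
  assume "0 < x"
  have "log 2 x \<le> real (nat \<lceil>log 2 x\<rceil>)"
    by linarith
  with \<open>0 < x\<close> show ?thesis
    by (simp add: log_le_iff powr_realpow)
qed

theorem proposition3:
  fixes \<epsilon> \<delta> :: real and L :: nat
  assumes "\<epsilon> > 0" and "\<delta> > 0" and "L \<ge> 2"
    and "2 * \<epsilon> < \<delta>" and "\<delta> \<le> 1 / real L"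
  shows "(\<exists>N Yc q est. B_private_unif \<epsilon> \<delta> L N Yc q est)
       \<and> log 2 (1 / \<epsilon>) \<le> real (NB_unif \<epsilon> \<delta> L)
       \<and> real (NB_unif \<epsilon> \<delta> L)
           \<le> real L * real_of_int \<lceil>log 2 (1 / (real L * \<epsilon>))\<rceil> + real L - 1"
proof -
  have L: "0 < L"
    using assms(3) by simp
  have "real L * (2 * \<epsilon>) < real L * \<delta>" and "real L * \<delta> \<le> 1" and "0 < real L * \<epsilon>"
    using assms(1,4,5) L by (simp_all add: field_simps)
  then have "0 < log 2 (1 / (real L * \<epsilon>))"
    by simp
  define K where "K = nat \<lceil>log 2 (1 / (real L * \<epsilon>))\<rceil>"
  have "1 / (real L * \<epsilon>) \<le> 2 ^ K"
    unfolding K_def using L assms(1) by (intro le_two_pow_ceiling_log) simp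
  then have "1 / (real L * 2 ^ K) \<le> \<epsilon>"
    using L assms(1) by (simp add: field_simps)
  then have bisection:
    "B_private_unif \<epsilon> \<delta> L (L - 1 + L * K) 1 (bisection_learner L) (bisection_estimator L K)"
    using B_private_unif_bisection[OF L assms(5)] by blast
  have "real (NB_unif \<epsilon> \<delta> L) \<le> real (L - 1 + L * K)"
    using NB_unif_le[OF bisection] by (simp only: of_nat_le_iff)
  also have "\<dots> = real L * real_of_int \<lceil>log 2 (1 / (real L * \<epsilon>))\<rceil> + real L - 1"
    using L \<open>0 < log 2 _\<close> by (simp add: K_def)
  finally show ?thesis
    using bisection B_private_unif_NB_unif[OF bisection] B_private_unif_log_le assms(1) by blast
qed

end
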